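(* There is a topological space of size $\mathfrak{c}$ which is $NWD$-separable but not $d$-separable.
   Context: A space $X$ is $NWD$-separable if for every sequence $\{D_n:n<\omega\}$ of dense subsets of $X$ there are nowhere dense sets $E_n\subseteq D_n$ such that $\bigcup_{n<\omega}E_n$ is dense. A space is $d$-separable if it has a dense subset which is a countable union of discrete subspaces. $\mathfrak{c}=2^{\aleph_0}$. *)

theory Defs
  imports "HOL-Analysis.Analysis"
begin

definition dense_in :: "'a topology \<Rightarrow> 'a set \<Rightarrow> bool" where
  "dense_in X D \<longleftrightarrow> D \<subseteq> topspace X \<and> X closure_of D = topspace X"

definition nowhere_dense_in :: "'a topology \<Rightarrow> 'a set \<Rightarrow> bool" where
  "nowhere_dense_in X E \<longleftrightarrow> E \<subseteq> topspace X \<and> X interior_of (X closure_of E) = {}"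

definition discrete_subspace :: "'a topology \<Rightarrow> 'a set \<Rightarrow> bool" where
  "discrete_subspace X A \<longleftrightarrow> A \<subseteq> topspace X \<and>
     (\<forall>a\<in>A. \<exists>U. openin X U \<and> U \<inter> A = {a})"

definition d_separable :: "'a topology \<Rightarrow> bool" where
  "d_separable X \<longleftrightarrow> (\<exists>D :: nat \<Rightarrow> 'a set.
     (\<forall>n. discrete_subspace X (D n)) \<and> dense_in X (\<Union>n. D n))"

definition NWD_separable :: "'a topology \<Rightarrow> bool" where
  "NWD_separable X \<longleftrightarrow> (\<forall>D :: nat \<Rightarrow> 'a set. (\<forall>n. dense_in X (D n)) \<longrightarrow>
     (\<exists>E :: nat \<Rightarrow> 'a set. (\<forall>n. E n \<subseteq> D n \<and> nowhere_dense_in X (E n))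
        \<and> dense_in X (\<Union>n. E n)))"

end

theory Submission
  imports Defs
begin

text \<open>
  Take points carrying a coordinate and a level in \<open>\<nat>\<close>, uncountably many coordinates on
  every level, and let a neighbourhood of a point of level \<open>k\<close> contain all points of level
  \<open>\<ge> k\<close> outside a countable set of coordinates. Sets of bounded level are closed with empty
  interior, hence nowhere dense. A dense set must have uncountably many coordinates on
  arbitrarily high levels, so from the \<open>n\<close>-th dense set one keeps a single level \<open>\<ge> n\<close>:
  these nowhere dense pieces reach every neighbourhood. On the other hand a discrete subspace
  has countably many coordinates (the neighbourhood of one of its points of minimal level
  isolating that point excludes the rest), so a countable union of discrete subspaces misses
  a neighbourhood and is not dense.
\<close>

definition level_nbhd :: "'a set \<Rightarrow> ('a \<Rightarrow> 'b) \<Rightarrow> ('a \<Rightarrow> nat) \<Rightarrow> 'b set \<Rightarrow> nat \<Rightarrow> 'a set" where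
  "level_nbhd P pr lv C k = {y\<in>P. pr y \<notin> C \<and> k \<le> lv y}"

definition level_open :: "'a set \<Rightarrow> ('a \<Rightarrow> 'b) \<Rightarrow> ('a \<Rightarrow> nat) \<Rightarrow> 'a set \<Rightarrow> bool" where
  "level_open P pr lv U \<longleftrightarrow> U \<subseteq> P \<and>
     (\<forall>x\<in>U. \<exists>C. countable C \<and> pr x \<notin> C \<and> level_nbhd P pr lv C (lv x) \<subseteq> U)"

definition level_topology :: "'a set \<Rightarrow> ('a \<Rightarrow> 'b) \<Rightarrow> ('a \<Rightarrow> nat) \<Rightarrow> 'a topology" where
  "level_topology P pr lv = topology (level_open P pr lv)"

lemma level_open_subset: "level_open P pr lv U \<Longrightarrow> U \<subseteq> P"
  by (simp add: level_open_def)

lemma level_openE: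
  assumes "level_open P pr lv U" "x \<in> U"
  obtains C where "countable C" "pr x \<notin> C" "level_nbhd P pr lv C (lv x) \<subseteq> U"
  using assms unfolding level_open_def by blast

lemma istopology_level_open: "istopology (level_open P pr lv)"
  unfolding istopology_def
proof (intro conjI allI impI)
  fix S T assume S: "level_open P pr lv S" and T: "level_open P pr lv T"
  show "level_open P pr lv (S \<inter> T)"
    unfolding level_open_def
  proof (intro conjI ballI)
    show "S \<inter> T \<subseteq> P" using level_open_subset[OF S] by blast
    fix x assume x: "x \<in> S \<inter> T"
    obtain C1 where "countable C1" "pr x \<notin> C1" "level_nbhd P pr lv C1 (lv x) \<subseteq> S"
      using level_openE[OF S, of x] x by blast
    moreover obtain C2 where "countable C2" "pr x \<notin> C2" "level_nbhd P pr lv C2 (lv x) \<subseteq> T"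
      using level_openE[OF T, of x] x by blast
    ultimately show "\<exists>C. countable C \<and> pr x \<notin> C \<and> level_nbhd P pr lv C (lv x) \<subseteq> S \<inter> T"
      by (intro exI[of _ "C1 \<union> C2"]) (auto simp: level_nbhd_def)
  qed
next
  fix K assume K: "\<forall>S\<in>K. level_open P pr lv S"
  show "level_open P pr lv (\<Union>K)"
    unfolding level_open_def
  proof (intro conjI ballI)
    show "\<Union>K \<subseteq> P" using K level_open_subset by blast
    fix x assume "x \<in> \<Union>K"
    then obtain S where S: "S \<in> K" "x \<in> S" by blast
    then obtain C where "countable C" "pr x \<notin> C" "level_nbhd P pr lv C (lv x) \<subseteq> S"
      using K level_openE by metis
    moreover have "S \<subseteq> \<Union>K"
      using S(1) by (rule Union_upper)
    ultimately show "\<exists>C. countable C \<and> pr x \<notin> C \<and> level_nbhd P pr lv C (lv x) \<subseteq> \<Union>K"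
      by (meson order_trans)
  qed
qed

lemma openin_level_topology:
  "openin (level_topology P pr lv) U \<longleftrightarrow> level_open P pr lv U"
  unfolding level_topology_def by (simp only: topology_inverse'[OF istopology_level_open])

lemma topspace_level_topology: "topspace (level_topology P pr lv) = P"
proof (rule subset_antisym)
  show "topspace (level_topology P pr lv) \<subseteq> P"
    using openin_topspace level_open_subset openin_level_topology by metis
  have "level_open P pr lv P"
    by (auto simp: level_open_def level_nbhd_def intro!: exI[of _ "{}"])
  then show "P \<subseteq> topspace (level_topology P pr lv)"
    by (simp add: openin_subset flip: openin_level_topology)
qed

lemma openin_level_topologyE:
  assumes "openin (level_topology P pr lv) U" "x \<in> U"
  obtains C where "countable C" "pr x \<notin> C" "level_nbhd P pr lv C (lv x) \<subseteq> U"
  using assms level_openE openin_level_topology by metis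

lemma openin_level_nbhd:
  "countable C \<Longrightarrow> openin (level_topology P pr lv) (level_nbhd P pr lv C k)"
  by (auto simp: openin_level_topology level_open_def level_nbhd_def intro!: exI[of _ C])

lemma dense_meets_level_nbhd:
  assumes "dense_in (level_topology P pr lv) D" "y \<in> P" "countable C" "pr y \<notin> C"
  obtains z where "z \<in> D" "z \<in> level_nbhd P pr lv C (lv y)"
proof -
  have "y \<in> level_topology P pr lv closure_of D"
    using assms(1,2) by (simp add: dense_in_def topspace_level_topology)
  moreover have "y \<in> level_nbhd P pr lv C (lv y)"
    using assms(2,4) by (simp add: level_nbhd_def)
  ultimately show thesis
    using that openin_level_nbhd[OF assms(3), of P pr lv "lv y"] unfolding in_closure_of by blast
qed

lemma dense_in_level_topology:
  assumes "E \<subseteq> P" "\<And>k. uncountable (pr ` {x\<in>E. k \<le> lv x})"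
  shows "dense_in (level_topology P pr lv) E"
proof -
  have "y \<in> level_topology P pr lv closure_of E" if y: "y \<in> P" for y
    unfolding in_closure_of
  proof (intro conjI allI impI)
    show "y \<in> topspace (level_topology P pr lv)"
      using y by (simp add: topspace_level_topology)
    fix T assume "y \<in> T \<and> openin (level_topology P pr lv) T"
    then obtain C where C: "countable C" "level_nbhd P pr lv C (lv y) \<subseteq> T"
      by (metis openin_level_topologyE)
    have "\<not> pr ` {x\<in>E. lv y \<le> lv x} \<subseteq> C"
      using assms(2) C(1) countable_subset by blast
    then obtain z where z: "z \<in> E" "lv y \<le> lv z" "pr z \<notin> C"
      by blast
    then have "z \<in> level_nbhd P pr lv C (lv y)"
      using assms(1) by (auto simp: level_nbhd_def)
    then show "\<exists>z. z \<in> E \<and> z \<in> T"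
      using C(2) z(1) by blast
  qed
  moreover have "level_topology P pr lv closure_of E \<subseteq> P"
    using closure_of_subset_topspace topspace_level_topology by metis
  ultimately show ?thesis
    using assms(1) by (auto simp: dense_in_def topspace_level_topology)
qed

locale rich_levels =
  fixes P :: "'a set" and pr :: "'a \<Rightarrow> 'b" and lv :: "'a \<Rightarrow> nat"
  assumes rich: "\<And>k C. countable C \<Longrightarrow> \<exists>y\<in>P. lv y = k \<and> pr y \<notin> C"
begin

abbreviation X :: "'a topology" where
  "X \<equiv> level_topology P pr lv"

lemma closedin_bounded_level: "closedin X {x\<in>P. lv x \<le> n}"
proof -
  have "topspace X - {x\<in>P. lv x \<le> n} = level_nbhd P pr lv {} (Suc n)"
    by (auto simp: topspace_level_topology level_nbhd_def)
  then show ?thesis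
    using openin_level_nbhd[of "{}"] by (simp add: closedin_def topspace_level_topology)
qed

lemma interior_of_bounded_level: "X interior_of {x\<in>P. lv x \<le> n} = {}"
proof (rule ccontr)
  assume "X interior_of {x\<in>P. lv x \<le> n} \<noteq> {}"
  then obtain x U where U: "openin X U" "x \<in> U" "U \<subseteq> {x\<in>P. lv x \<le> n}"
    by (auto simp: interior_of_def)
  then obtain C where C: "countable C" "level_nbhd P pr lv C (lv x) \<subseteq> U"
    by (metis openin_level_topologyE)
  obtain y where "y \<in> P" "lv y = n + 1 + lv x" "pr y \<notin> C"
    using rich[OF C(1)] by blast
  then have "y \<in> U"
    using C(2) by (auto simp: level_nbhd_def)
  then show False
    using U(3) \<open>lv y = n + 1 + lv x\<close> by auto
qed

lemma nowhere_dense_bounded_level: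
  assumes "E \<subseteq> P" "\<forall>x\<in>E. lv x \<le> n"
  shows "nowhere_dense_in X E"
proof -
  have "X closure_of E \<subseteq> {x\<in>P. lv x \<le> n}"
    using assms by (intro closure_of_minimal[OF _ closedin_bounded_level]) auto
  then have "X interior_of (X closure_of E) = {}"
    using interior_of_mono interior_of_bounded_level by blast
  then show ?thesis
    using assms(1) by (simp add: nowhere_dense_in_def topspace_level_topology)
qed

lemma dense_uncountable_high_level:
  assumes "dense_in X D"
  shows "\<exists>l\<ge>n. uncountable (pr ` (D \<inter> {x. lv x = l}))"
proof (rule ccontr)
  assume "\<not> ?thesis"
  then have "countable (\<Union>l\<in>{n..}. pr ` (D \<inter> {x. lv x = l}))" (is "countable ?C")
    by auto
  then obtain y where y: "y \<in> P" "lv y = n" "pr y \<notin> ?C"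
    using rich by blast
  obtain z where "z \<in> D" "z \<in> level_nbhd P pr lv ?C (lv y)"
    using dense_meets_level_nbhd[OF assms y(1) \<open>countable ?C\<close> y(3)] .
  then show False
    using y(2) by (auto simp: level_nbhd_def)
qed

theorem NWD_separable: "NWD_separable X"
  unfolding NWD_separable_def
proof (intro allI impI)
  fix D :: "nat \<Rightarrow> 'a set" assume D: "\<forall>n. dense_in X (D n)"
  have "\<forall>n. \<exists>l. l \<ge> n \<and> uncountable (pr ` (D n \<inter> {x. lv x = l}))"
    using dense_uncountable_high_level D by blast
  then obtain L where "\<forall>n. L n \<ge> n \<and> uncountable (pr ` (D n \<inter> {x. lv x = L n}))"
    by (rule choice[THEN exE])
  then have L: "L n \<ge> n" "uncountable (pr ` (D n \<inter> {x. lv x = L n}))" for n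
    by simp_all
  define E where "E n = D n \<inter> {x. lv x = L n}" for n
  have DP: "D n \<subseteq> P" for n
    using D by (simp add: dense_in_def topspace_level_topology)
  have pieces: "E n \<subseteq> D n \<and> nowhere_dense_in X (E n)" for n
    using DP[of n] nowhere_dense_bounded_level[of "E n" "L n"] by (auto simp: E_def)
  have "pr ` E k \<subseteq> pr ` {x\<in>\<Union>n. E n. k \<le> lv x}" for k
    using L(1)[of k] by (auto simp: E_def)
  moreover have "uncountable (pr ` E k)" for k
    using L(2) by (simp add: E_def)
  ultimately have "uncountable (pr ` {x\<in>\<Union>n. E n. k \<le> lv x})" for k
    by (metis countable_subset)
  moreover have "(\<Union>n. E n) \<subseteq> P"
    using DP by (auto simp: E_def)
  ultimately have "dense_in X (\<Union>n. E n)"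
    by (intro dense_in_level_topology)
  with pieces show "\<exists>E. (\<forall>n. E n \<subseteq> D n \<and> nowhere_dense_in X (E n)) \<and> dense_in X (\<Union>n. E n)"
    by blast
qed

lemma discrete_subspace_countable_image:
  assumes "discrete_subspace X A"
  shows "countable (pr ` A)"
proof (cases "A = {}")
  case False
  then obtain a0 where "a0 \<in> A"
    by blast
  then obtain a where a: "a \<in> A" "\<And>b. b \<in> A \<Longrightarrow> lv a \<le> lv b"
    using ex_has_least_nat[of "\<lambda>a. a \<in> A" a0 lv] by blast
  obtain U where U: "openin X U" "U \<inter> A = {a}"
    using assms a(1) unfolding discrete_subspace_def by blast
  then have "a \<in> U"
    by blast
  then obtain C where C: "countable C" "level_nbhd P pr lv C (lv a) \<subseteq> U"
    using openin_level_topologyE[OF U(1)] by blast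
  have "A \<subseteq> P"
    using assms by (simp add: discrete_subspace_def topspace_level_topology)
  have "b = a" if "b \<in> A" "pr b \<notin> C" for b
  proof -
    have "b \<in> U"
      using that \<open>A \<subseteq> P\<close> a(2) C(2) by (auto simp: level_nbhd_def)
    then show ?thesis
      using U(2) that(1) by blast
  qed
  then have "pr ` A \<subseteq> insert (pr a) C"
    by blast
  moreover have "countable (insert (pr a) C)"
    using C(1) by simp
  ultimately show ?thesis
    by (rule countable_subset)
qed simp

theorem not_d_separable: "\<not> d_separable X"
proof
  assume "d_separable X"
  then obtain D :: "nat \<Rightarrow> 'a set"
    where D: "\<And>n. discrete_subspace X (D n)" "dense_in X (\<Union>n. D n)"
    unfolding d_separable_def by blast
  have "countable (\<Union>n. pr ` D n)" (is "countable ?C")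
    by (simp add: discrete_subspace_countable_image D(1))
  then obtain y where y: "y \<in> P" "pr y \<notin> ?C"
    using rich by blast
  obtain z where "z \<in> (\<Union>n. D n)" "z \<in> level_nbhd P pr lv ?C (lv y)"
    using dense_meets_level_nbhd[OF D(2) y(1) \<open>countable ?C\<close> y(2)] .
  then show False
    by (auto simp: level_nbhd_def)
qed

end

lemma rich_levels_real_singletons:
  "rich_levels (range (\<lambda>r::real. {r})) (\<lambda>x. frac (the_elem x)) (\<lambda>x. nat \<lfloor>the_elem x\<rfloor>)"
proof
  fix k :: nat and C :: "real set" assume "countable C"
  then obtain t where t: "t \<in> {0<..<1::real}" "t \<notin> C"
    using uncountable_open_interval[of 0 1] countable_subset by (metis less_numeral_extra(1) subsetI)
  then have "\<lfloor>real k + t\<rfloor> = int k"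
    by (simp add: floor_eq_iff)
  then show "\<exists>y\<in>range (\<lambda>r. {r}). nat \<lfloor>the_elem y\<rfloor> = k \<and> frac (the_elem y) \<notin> C"
    using t by (intro bexI[of _ "{real k + t}"]) (auto simp: frac_def)
qed

interpretation real_levels: rich_levels "range (\<lambda>r::real. {r})" "\<lambda>x. frac (the_elem x)" "\<lambda>x. nat \<lfloor>the_elem x\<rfloor>"
  by (rule rich_levels_real_singletons)

theorem mainTheorem10:
  shows "\<exists>X :: real set topology. topspace X \<approx> (UNIV :: real set)
           \<and> NWD_separable X \<and> \<not> d_separable X"
proof (intro exI conjI)
  have "(UNIV :: real set) \<approx> range (\<lambda>r::real. {r})"
    unfolding eqpoll_def by (rule exI[of _ "\<lambda>r. {r}"]) (auto simp: bij_betw_def inj_on_def)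
  then show "topspace real_levels.X \<approx> (UNIV :: real set)"
    by (simp add: topspace_level_topology eqpoll_sym)
  show "NWD_separable real_levels.X" by (rule real_levels.NWD_separable)
  show "\<not> d_separable real_levels.X" by (rule real_levels.not_d_separable)
qed

end
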